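(* Let $z=(z^1,\dots,z^n)$ be coordinates on an open set $Z\subset\mathbb{R}^n$, with $x^a=z^a$ ($a=1,\dots,n-1$) and $u=z^n$, and let $w=w(z)$ be a scalar unknown. The second-order equation $\tilde E(z;w_i;w_{ij})=0$ together with the condition $w=0$ is a covariant form of some second-order partial differential equation $E(x,u;u_a;u_{ab})=0$ if and only if it is invariant under the infinite-dimensional group of point transformations $(z,w)\mapsto(z,s(z)w)$, where $s$ ranges over smooth nowhere-vanishing functions of $z$.
   Context: Here $w_i=\partial w/\partial z^i$, $w_{ij}=\partial^2w/\partial z^i\partial z^j$, $u_a=\partial u/\partial x^a$, $u_{ab}=\partial^2 u/\partial x^a\partial x^b$, and one works on the region $w_n\ne0$. Invariance means invariance of the system $\{\tilde E=0,\ w=0\}$ in the second-order jet space under the second prolongation of the transformations; at points with $w=0$ the prolonged transformation acts by $w_i\mapsto s w_i$, $w_{ij}\mapsto s w_{ij}+s_i w_j+s_j w_i$ (with $s_i=\partial s/\partial z^i$). If $u=u(x)$ is defined implicitly by $w(x,u)=0$, then $u_a[w]=-w_a/w_n$ and $u_{ab}[w]=-\frac{w_{ab}}{w_n}+\frac{w_{na}w_b}{w_n^2}+\frac{w_{nb}w_a}{w_n^2}-\frac{w_aw_bw_{nn}}{w_n^3}$. The equation $\tilde E(z;w_i;w_{ij})=0$ together with $w=0$ is called a covariant form of $E(x,u;u_a;u_{ab})=0$ if, for all $z$ and all values of $(w_i,w_{ij})$ with $w_n\neq0$, $\tilde E(z;w_i;w_{ij})=0$ holds if and only if $E(z;u_a[w];u_{ab}[w])=0$.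 *)

theory Defs
  imports "HOL-Analysis.Analysis"
begin

text \<open>Coordinates z on real^'n; the distinguished index nn plays the role of z^n = u,
  the remaining indices a \<noteq> nn are the x^a.\<close>

definition pderiv_at :: "((real^'n) \<Rightarrow> real) \<Rightarrow> 'n \<Rightarrow> real^'n \<Rightarrow> real" where
  "pderiv_at f i z = frechet_derivative f (at z) (axis i 1)"

fun Ck_on :: "nat \<Rightarrow> (real^'n) set \<Rightarrow> ((real^'n) \<Rightarrow> real) \<Rightarrow> bool" where
  "Ck_on 0 S f = continuous_on S f"
| "Ck_on (Suc k) S f = ((\<forall>z\<in>S. f differentiable (at z)) \<and>
      (\<forall>i. Ck_on k S (\<lambda>z. pderiv_at f i z)))"

definition smooth_on :: "(real^'n) set \<Rightarrow> ((real^'n) \<Rightarrow> real) \<Rightarrow> bool" where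
  "smooth_on S f = (\<forall>k. Ck_on k S f)"

definition symmetric_mat :: "real^'n^'n \<Rightarrow> bool" where
  "symmetric_mat W = (\<forall>i j. W$i$j = W$j$i)"

definition u1 :: "'n \<Rightarrow> real^'n \<Rightarrow> real^'n" where
  "u1 nn p = (\<chi> a. if a = nn then 0 else - p$a / p$nn)"

definition u2 :: "'n \<Rightarrow> real^'n \<Rightarrow> real^'n^'n \<Rightarrow> real^'n^'n" where
  "u2 nn p W = (\<chi> a b. if a = nn \<or> b = nn then 0 else
      - W$a$b / p$nn + W$nn$a * p$b / (p$nn)^2 + W$nn$b * p$a / (p$nn)^2
      - p$a * p$b * W$nn$nn / (p$nn)^3)"

definition covariant_form ::
  "(real^'n) set \<Rightarrow> 'n \<Rightarrow> ((real^'n) \<Rightarrow> real^'n \<Rightarrow> real^'n^'n \<Rightarrow> real) \<Rightarrow> bool" where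
  "covariant_form Z nn Et =
     (\<exists>E :: (real^'n) \<Rightarrow> real^'n \<Rightarrow> real^'n^'n \<Rightarrow> real.
        \<forall>z\<in>Z. \<forall>p W. symmetric_mat W \<and> p$nn \<noteq> 0 \<longrightarrow>
          (Et z p W = 0 \<longleftrightarrow> E z (u1 nn p) (u2 nn p W) = 0))"

text \<open>Second prolongation of (z,w) \<mapsto> (z, s(z) w) at points with w = 0.\<close>
definition prolong_grad :: "((real^'n) \<Rightarrow> real) \<Rightarrow> real^'n \<Rightarrow> real^'n \<Rightarrow> real^'n" where
  "prolong_grad s z p = s z *\<^sub>R p"

definition prolong_hess ::
  "((real^'n) \<Rightarrow> real) \<Rightarrow> real^'n \<Rightarrow> real^'n \<Rightarrow> real^'n^'n \<Rightarrow> real^'n^'n" where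
  "prolong_hess s z p W =
     (\<chi> i j. s z * W$i$j + pderiv_at s i z * p$j + pderiv_at s j z * p$i)"

definition scaling_invariant ::
  "(real^'n) set \<Rightarrow> 'n \<Rightarrow> ((real^'n) \<Rightarrow> real^'n \<Rightarrow> real^'n^'n \<Rightarrow> real) \<Rightarrow> bool" where
  "scaling_invariant Z nn Et =
     (\<forall>s. smooth_on Z s \<and> (\<forall>z\<in>Z. s z \<noteq> 0) \<longrightarrow>
        (\<forall>z\<in>Z. \<forall>p W. symmetric_mat W \<and> p$nn \<noteq> 0 \<and> Et z p W = 0 \<longrightarrow>
            Et z (prolong_grad s z p) (prolong_hess s z p W) = 0))"

end

theory Submission
  imports Defs
begin

text \<open>
  At a point where w = 0 the prolonged scaling acts on the jet (w_i, w_ij) by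
  w_i \<mapsto> s w_i and w_ij \<mapsto> s w_ij + s_i w_j + s_j w_i, and since s(z) \<noteq> 0 and the gradient of s
  at z can be prescribed freely (take s = c exp(\<tau> \<bullet> (y - z))), the orbits are exactly the sets
  {(c w_i, c w_ij + \<sigma>_i w_j + \<sigma>_j w_i)}. The quantities u_a[w], u_ab[w] are constant on orbits;
  conversely, if two jets with w_n \<noteq> 0 give the same u_a, their gradients are proportional, and
  u_ab[w] is linear in w_ij with kernel (on symmetric matrices) the symmetrised products
  \<sigma>_i w_j + \<sigma>_j w_i, so equal u_ab puts them in one orbit. Hence both sides of the theorem say
  that at each z the zero set of Et is a union of fibres of (w_i, w_ij) \<mapsto> (u_a[w], u_ab[w]).
\<close>

lemma has_derivative_imp_pderiv_at:
  "(f has_derivative f') (at z) \<Longrightarrow> pderiv_at f i z = f' (axis i 1)"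
  unfolding pderiv_at_def by (simp add: frechet_derivative_at[symmetric])

lemma has_derivative_scaled_exp_affine:
  "((\<lambda>y::real^'n. c * exp (\<tau> \<bullet> y + b)) has_derivative
     (\<lambda>h. c * (exp (\<tau> \<bullet> y + b) * (\<tau> \<bullet> h)))) (at y)"
  by (auto intro!: derivative_eq_intros)

lemma pderiv_at_scaled_exp_affine:
  "pderiv_at (\<lambda>y::real^'n. c * exp (\<tau> \<bullet> y + b)) i = (\<lambda>y. (c * \<tau>$i) * exp (\<tau> \<bullet> y + b))"
  by (rule ext) (simp add: has_derivative_imp_pderiv_at[OF has_derivative_scaled_exp_affine] inner_axis)

lemma smooth_on_scaled_exp_affine: "smooth_on S (\<lambda>y::real^'n. c * exp (\<tau> \<bullet> y + b))"
  unfolding smooth_on_def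
proof
  fix k show "Ck_on k S (\<lambda>y. c * exp (\<tau> \<bullet> y + b))"
  proof (induction k arbitrary: c)
    case 0
    show ?case by (auto intro!: continuous_intros)
  next
    case (Suc k)
    have "(\<lambda>y. c * exp (\<tau> \<bullet> y + b)) differentiable (at z)" for z
      using has_derivative_scaled_exp_affine unfolding differentiable_def by blast
    with Suc show ?case by (simp add: pderiv_at_scaled_exp_affine)
  qed
qed

lemma exists_smooth_with_value_and_gradient:
  fixes g z :: "real^'n"
  assumes "c \<noteq> 0"
  shows "\<exists>s. smooth_on S s \<and> (\<forall>y. s y \<noteq> 0) \<and> s z = c \<and> (\<chi> i. pderiv_at s i z) = g"
proof -
  define \<tau> where "\<tau> = (1 / c) *\<^sub>R g"
  define s where "s y = c * exp (\<tau> \<bullet> y + - (\<tau> \<bullet> z))" for y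
  have "smooth_on S s"
    unfolding s_def[abs_def] by (rule smooth_on_scaled_exp_affine)
  moreover have "(\<chi> i. pderiv_at s i z) = g"
    using assms unfolding s_def[abs_def] pderiv_at_scaled_exp_affine
    by (simp add: \<tau>_def vec_eq_iff)
  moreover have "s z = c" "\<forall>y. s y \<noteq> 0"
    using assms by (simp_all add: s_def)
  ultimately show ?thesis by blast
qed

definition sym_outer :: "real^'n \<Rightarrow> real^'n \<Rightarrow> real^'n^'n" where
  "sym_outer \<sigma> p = (\<chi> i j. \<sigma>$i * p$j + \<sigma>$j * p$i)"

lemma prolong_hess_eq:
  "prolong_hess s z p W = s z *\<^sub>R W + sym_outer (\<chi> i. pderiv_at s i z) p"
  by (simp add: prolong_hess_def sym_outer_def vec_eq_iff)

lemma symmetric_mat_prolong_hess: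
  "symmetric_mat W \<Longrightarrow> symmetric_mat (prolong_hess s z p W)"
  by (simp add: symmetric_mat_def prolong_hess_def algebra_simps)

lemma u1_scaleR: "c \<noteq> 0 \<Longrightarrow> u1 nn (c *\<^sub>R p) = u1 nn p"
  by (simp add: u1_def vec_eq_iff)

lemma u1_eq_imp_scaleR:
  assumes "u1 nn p' = u1 nn p" and "p$nn \<noteq> 0" and "p'$nn \<noteq> 0"
  shows "p' = (p'$nn / p$nn) *\<^sub>R p"
unfolding vec_eq_iff
proof
  fix a
  show "p'$a = ((p'$nn / p$nn) *\<^sub>R p)$a"
  proof (cases "a = nn")
    case False
    then have "p'$a / p'$nn = p$a / p$nn"
      using arg_cong[OF assms(1), of "\<lambda>q. q$a"] by (simp add: u1_def)
    then show ?thesis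
      using assms(2,3) by (simp add: field_simps)
  qed (use assms(2) in simp)
qed

lemma u2_add: "u2 nn p (W + V) = u2 nn p W + u2 nn p V"
  by (simp add: u2_def vec_eq_iff add_divide_distrib diff_divide_distrib algebra_simps)

lemma u2_diff: "u2 nn p (W - V) = u2 nn p W - u2 nn p V"
  by (simp add: u2_def vec_eq_iff add_divide_distrib diff_divide_distrib algebra_simps)

lemma u2_scaleR_hess: "u2 nn p (c *\<^sub>R W) = c *\<^sub>R u2 nn p W"
  by (simp add: u2_def vec_eq_iff algebra_simps)

lemma u2_scaleR_grad: "u2 nn (c *\<^sub>R p) W = (1 / c) *\<^sub>R u2 nn p W"
  by (cases "c = 0") (simp_all add: u2_def vec_eq_iff field_simps power2_eq_square power3_eq_cube)

lemma u2_sym_outer: "p$nn \<noteq> 0 \<Longrightarrow> u2 nn p (sym_outer \<sigma> p) = 0"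
  by (simp add: u2_def sym_outer_def vec_eq_iff field_simps power2_eq_square power3_eq_cube)

lemma u2_eq_0_imp_sym_outer:
  assumes sym: "symmetric_mat D" and pn: "p$nn \<noteq> 0" and u2: "u2 nn p D = 0"
  shows "\<exists>\<sigma>. D = sym_outer \<sigma> p"
proof -
  define r where "r i = p$i / p$nn" for i
  have Dab: "D$a$b = D$a$nn * r b + D$b$nn * r a - r a * r b * D$nn$nn"
    if "a \<noteq> nn" "b \<noteq> nn" for a b
  proof -
    have "(D$nn$a * r b + D$nn$b * r a - r a * r b * D$nn$nn - D$a$b) / p$nn
        = - D$a$b / p$nn + D$nn$a * p$b / (p$nn)^2 + D$nn$b * p$a / (p$nn)^2
          - p$a * p$b * D$nn$nn / (p$nn)^3"
      using pn by (simp add: r_def field_simps power2_eq_square power3_eq_cube)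
    also have "\<dots> = 0"
      using arg_cong[OF u2, of "\<lambda>U. U$a$b"] that by (simp add: u2_def)
    finally show ?thesis
      using pn sym unfolding symmetric_mat_def by simp
  qed
  have Dij: "D$i$j = D$i$nn * r j + D$j$nn * r i - r i * r j * D$nn$nn" for i j
    using pn sym Dab[of i j] unfolding symmetric_mat_def
    by (cases "i = nn"; cases "j = nn") (simp_all add: r_def)
  define \<sigma> where "\<sigma> = (\<chi> i. (D$i$nn - D$nn$nn * r i / 2) / p$nn)"
  have "D$i$j = \<sigma>$i * p$j + \<sigma>$j * p$i" for i j
  proof -
    have "\<sigma>$i * p$j + \<sigma>$j * p$i = D$i$nn * r j + D$j$nn * r i - r i * r j * D$nn$nn"
      using pn by (simp add: \<sigma>_def r_def field_simps)
    then show ?thesis using Dij[of i j] by simp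
  qed
  then have "D = sym_outer \<sigma> p"
    by (simp add: sym_outer_def vec_eq_iff)
  then show ?thesis ..
qed

lemma u2_prolong:
  assumes "s z \<noteq> 0" and "p$nn \<noteq> 0"
  shows "u2 nn (prolong_grad s z p) (prolong_hess s z p W) = u2 nn p W"
  using assms
  by (simp add: prolong_grad_def prolong_hess_eq u2_scaleR_grad u2_add u2_scaleR_hess u2_sym_outer)

lemma exists_scaling_of_same_u_jet:
  fixes p p' z :: "real^'n" and W W' :: "real^'n^'n"
  assumes "symmetric_mat W" "p$nn \<noteq> 0" "symmetric_mat W'" "p'$nn \<noteq> 0"
    and u1: "u1 nn p' = u1 nn p" and u2: "u2 nn p' W' = u2 nn p W"
  shows "\<exists>s. smooth_on S s \<and> (\<forall>y. s y \<noteq> 0) \<and>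
    prolong_grad s z p = p' \<and> prolong_hess s z p W = W'"
proof -
  define c where "c = p'$nn / p$nn"
  have "c \<noteq> 0" using assms by (simp add: c_def)
  have p': "p' = c *\<^sub>R p"
    unfolding c_def using u1_eq_imp_scaleR[OF u1] assms by blast
  have "u2 nn p W' = c *\<^sub>R ((1 / c) *\<^sub>R u2 nn p W')"
    using \<open>c \<noteq> 0\<close> by simp
  also have "\<dots> = u2 nn p (c *\<^sub>R W)"
    using u2 by (simp add: p' u2_scaleR_grad u2_scaleR_hess)
  finally have "u2 nn p W' = u2 nn p (c *\<^sub>R W)" .
  then have "u2 nn p (W' - c *\<^sub>R W) = 0"
    by (simp add: u2_diff)
  moreover have "symmetric_mat (W' - c *\<^sub>R W)"
    using assms by (simp add: symmetric_mat_def)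
  ultimately obtain \<sigma> where \<sigma>: "W' - c *\<^sub>R W = sym_outer \<sigma> p"
    using u2_eq_0_imp_sym_outer assms by blast
  obtain s where "smooth_on S s" "\<forall>y. s y \<noteq> 0" "s z = c" "(\<chi> i. pderiv_at s i z) = \<sigma>"
    using exists_smooth_with_value_and_gradient[OF \<open>c \<noteq> 0\<close>] by blast
  moreover from this have "prolong_grad s z p = p'" "prolong_hess s z p W = W'"
    using \<sigma> by (simp_all add: p' prolong_grad_def prolong_hess_eq algebra_simps)
  ultimately show ?thesis by blast
qed

definition u_jet_determined ::
  "(real^'n) set \<Rightarrow> 'n \<Rightarrow> ((real^'n) \<Rightarrow> real^'n \<Rightarrow> real^'n^'n \<Rightarrow> real) \<Rightarrow> bool" where
  "u_jet_determined Z nn Et =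
     (\<forall>z\<in>Z. \<forall>p W p' W'. symmetric_mat W \<and> p$nn \<noteq> 0 \<and> symmetric_mat W' \<and> p'$nn \<noteq> 0 \<and>
        u1 nn p' = u1 nn p \<and> u2 nn p' W' = u2 nn p W \<and> Et z p W = 0 \<longrightarrow> Et z p' W' = 0)"

lemma u_jet_determinedI:
  assumes "\<And>z p W p' W'. z \<in> Z \<Longrightarrow> symmetric_mat W \<Longrightarrow> p$nn \<noteq> 0 \<Longrightarrow>
      symmetric_mat W' \<Longrightarrow> p'$nn \<noteq> 0 \<Longrightarrow> u1 nn p' = u1 nn p \<Longrightarrow>
      u2 nn p' W' = u2 nn p W \<Longrightarrow> Et z p W = 0 \<Longrightarrow> Et z p' W' = 0"
  shows "u_jet_determined Z nn Et"
  using assms unfolding u_jet_determined_def by blast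

lemma u_jet_determinedD:
  assumes "u_jet_determined Z nn Et" and "z \<in> Z" and "symmetric_mat W" and "p$nn \<noteq> 0"
    and "symmetric_mat W'" and "p'$nn \<noteq> 0" and "u1 nn p' = u1 nn p"
    and "u2 nn p' W' = u2 nn p W" and "Et z p W = 0"
  shows "Et z p' W' = 0"
  using assms unfolding u_jet_determined_def by blast

lemma covariant_form_iff_u_jet_determined:
  fixes Et :: "(real^'n) \<Rightarrow> real^'n \<Rightarrow> real^'n^'n \<Rightarrow> real"
  shows "covariant_form Z nn Et \<longleftrightarrow> u_jet_determined Z nn Et"
proof
  assume "covariant_form Z nn Et"
  then obtain E :: "real^'n \<Rightarrow> real^'n \<Rightarrow> real^'n^'n \<Rightarrow> real"
    where E: "\<And>z p W. z \<in> Z \<Longrightarrow> p$nn \<noteq> 0 \<Longrightarrow> symmetric_mat W \<Longrightarrow>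
      Et z p W = 0 \<longleftrightarrow> E z (u1 nn p) (u2 nn p W) = 0"
    unfolding covariant_form_def by blast
  show "u_jet_determined Z nn Et"
  proof (rule u_jet_determinedI)
    fix z p W p' W'
    assume "z \<in> Z" "symmetric_mat W" "p$nn \<noteq> 0" "symmetric_mat W'" "p'$nn \<noteq> 0"
      "u1 nn p' = u1 nn p" "u2 nn p' W' = u2 nn p W" "Et z p W = 0"
    then show "Et z p' W' = 0"
      using E[of z p W] E[of z p' W'] by simp
  qed
next
  assume det: "u_jet_determined Z nn Et"
  define E :: "real^'n \<Rightarrow> real^'n \<Rightarrow> real^'n^'n \<Rightarrow> real" where
    "E z q U = (if \<exists>p W. symmetric_mat W \<and> p$nn \<noteq> 0 \<and> u1 nn p = q \<and> u2 nn p W = U \<and>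
      Et z p W = 0 then 0 else 1)" for z q U
  have "Et z p W = 0 \<longleftrightarrow> E z (u1 nn p) (u2 nn p W) = 0"
    if "z \<in> Z" "symmetric_mat W" "p$nn \<noteq> 0" for z p W
  proof
    assume "Et z p W = 0"
    with that have "\<exists>p' W'. symmetric_mat W' \<and> p'$nn \<noteq> 0 \<and> u1 nn p' = u1 nn p \<and>
        u2 nn p' W' = u2 nn p W \<and> Et z p' W' = 0"
      by blast
    then show "E z (u1 nn p) (u2 nn p W) = 0"
      unfolding E_def by presburger
  next
    assume "E z (u1 nn p) (u2 nn p W) = 0"
    then obtain p' W' where "symmetric_mat W'" "p'$nn \<noteq> 0" "u1 nn p' = u1 nn p"
        "u2 nn p' W' = u2 nn p W" "Et z p' W' = 0"
      unfolding E_def by (metis zero_neq_one)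
    then show "Et z p W = 0"
      using u_jet_determinedD[OF det \<open>z \<in> Z\<close>, of W' p' W p] that by simp
  qed
  then show "covariant_form Z nn Et"
    unfolding covariant_form_def by blast
qed

lemma scaling_invariant_iff_u_jet_determined:
  fixes Et :: "(real^'n) \<Rightarrow> real^'n \<Rightarrow> real^'n^'n \<Rightarrow> real"
  shows "scaling_invariant Z nn Et \<longleftrightarrow> u_jet_determined Z nn Et"
proof
  assume inv: "scaling_invariant Z nn Et"
  show "u_jet_determined Z nn Et"
  proof (rule u_jet_determinedI)
    fix z p W p' W'
    assume "z \<in> Z" "symmetric_mat W" "p$nn \<noteq> 0" "symmetric_mat W'" "p'$nn \<noteq> 0"
      "u1 nn p' = u1 nn p" "u2 nn p' W' = u2 nn p W" "Et z p W = 0"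
    moreover obtain s where "smooth_on Z s" "\<forall>y. s y \<noteq> 0"
      "prolong_grad s z p = p'" "prolong_hess s z p W = W'"
      using exists_scaling_of_same_u_jet[of W p nn W' p' Z z] calculation by blast
    ultimately show "Et z p' W' = 0"
      using inv unfolding scaling_invariant_def by blast
  qed
next
  assume det: "u_jet_determined Z nn Et"
  show "scaling_invariant Z nn Et"
    unfolding scaling_invariant_def
  proof (intro allI impI ballI, elim conjE)
    fix s :: "real^'n \<Rightarrow> real" and z p W
    assume s: "\<forall>z\<in>Z. s z \<noteq> 0" and z: "z \<in> Z" and W: "symmetric_mat W"
      and p: "p$nn \<noteq> 0" and Et: "Et z p W = 0"
    have "s z \<noteq> 0" using s z by blast
    have "symmetric_mat (prolong_hess s z p W)"
      using W by (rule symmetric_mat_prolong_hess)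
    moreover have "(prolong_grad s z p)$nn \<noteq> 0"
      using \<open>s z \<noteq> 0\<close> p by (simp add: prolong_grad_def)
    moreover have "u1 nn (prolong_grad s z p) = u1 nn p"
      using \<open>s z \<noteq> 0\<close> by (simp add: prolong_grad_def u1_scaleR)
    moreover have "u2 nn (prolong_grad s z p) (prolong_hess s z p W) = u2 nn p W"
      using \<open>s z \<noteq> 0\<close> p by (rule u2_prolong)
    ultimately show "Et z (prolong_grad s z p) (prolong_hess s z p W) = 0"
      by (rule u_jet_determinedD[OF det z W p _ _ _ _ Et])
  qed
qed

theorem theorem3:
  fixes Z :: "(real^'n) set" and nn :: 'n
    and Et :: "(real^'n) \<Rightarrow> real^'n \<Rightarrow> real^'n^'n \<Rightarrow> real"
  assumes "open Z" and "CARD('n) \<ge> 2"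
  shows "covariant_form Z nn Et \<longleftrightarrow> scaling_invariant Z nn Et"
  by (simp add: covariant_form_iff_u_jet_determined scaling_invariant_iff_u_jet_determined)

end
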